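(* Let $t\ge0$, $h\ge0$ and $i$ be integers with $-t\le i\le h$. Let $\Phi(z)=\sum_{n\ge0}c_nz^n$, where $c_n$ is the number of Deutsch paths of $n$ steps from $(0,0)$ to $(n,i)$ that stay within levels $-t,\dots,h$ throughout. Let $v=v(z)$ be the power series with $v(0)=0$ satisfying $z=\frac{v}{1+v+v^2}$. Then $$\Phi(z)=\frac{(1+v)^{-i-2}(1-v^{i+t+1})\,v\,(1-v^{h+1})(1+v+v^2)}{(1-v)(1-v^{h+t+3})}\quad\text{for } i<0,$$ $$\Phi(z)=\frac{v^{i}(1-v^{t+2})(1-v^{2-i+h})(1+v+v^2)}{(1-v)(1+v)^{i+2}(1-v^{h+t+3})}\quad\text{for } i\ge0.$$
   Context: A Deutsch path is a lattice path whose steps are up-steps $(1,1)$ and down-steps $(1,-k)$ for any integer $k\ge1$. The series $v$ is given explicitly by $v=\frac{1-z-\sqrt{1-2z-3z^2}}{2z}$. *)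

theory Defs
  imports "HOL-Computational_Algebra.Formal_Power_Series"
begin

text \<open>A Deutsch path with n steps is encoded by its list of vertical increments:
  each step is either an up-step (+1) or a down-step (-k) with k \<ge> 1.
  The path starts at level 0; its levels are the partial sums of the increments.\<close>

definition deutsch_step :: "int \<Rightarrow> bool" where
  "deutsch_step s \<longleftrightarrow> s = 1 \<or> s \<le> -1"

definition bounded_deutsch_paths :: "nat \<Rightarrow> nat \<Rightarrow> int \<Rightarrow> nat \<Rightarrow> int list set" where
  "bounded_deutsch_paths t h i n =
     {ss. length ss = n \<and> (\<forall>s\<in>set ss. deutsch_step s) \<and>
          (\<forall>k\<le>n. - int t \<le> sum_list (take k ss) \<and> sum_list (take k ss) \<le> int h) \<and>
          sum_list ss = i}"

definition fps_power_int :: "'a::field fps \<Rightarrow> int \<Rightarrow> 'a fps" where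
  "fps_power_int a k = (if k \<ge> 0 then a ^ nat k else inverse a ^ nat (- k))"

end

theory Submission
  imports Defs "HOL-Computational_Algebra.Formal_Laurent_Series"
begin

(* Cutting off the last step shows that the generating functions G_j, -t <= j <= h, satisfy
   G_j = [j = 0] + z (G_{j-1} + G_{j+1} + ... + G_h) with G_{-t-1} = 0, a system that determines
   them coefficient by coefficient.  Subtracting consecutive equations gives the second-order
   recurrence (1 + z) G_j - (1 + z) G_{j+1} - z G_{j-1} = [j = 0] - [j = -1], whose characteristic
   equation (1 + z)(x - x^2) = z has the roots v/(1+v) and 1/(1+v) once z = v/(1+v+v^2).  Hence on
   either side of level 0 the solution is a combination of powers of these two roots, and the
   four coefficients are fixed by G_{-t-1} = 0, by the equation at the top level h and by the two
   jump conditions at levels -1 and 0.  All computations take place in the field of formal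
   Laurent series. *)

definition deutsch_predecessors :: "nat \<Rightarrow> nat \<Rightarrow> int \<Rightarrow> int set" where
  "deutsch_predecessors t h j = {c \<in> {- int t..int h}. deutsch_step (j - c)}"

lemma deutsch_predecessors_subset: "deutsch_predecessors t h j \<subseteq> {- int t..int h}"
  by (auto simp: deutsch_predecessors_def)

lemma finite_deutsch_predecessors: "finite (deutsch_predecessors t h j)"
  using deutsch_predecessors_subset by (rule finite_subset) simp

lemma deutsch_predecessors_eq:
  assumes "- int t \<le> j" "j \<le> int h"
  shows "deutsch_predecessors t h j = {c. c = j - 1 \<and> - int t \<le> c} \<union> {j + 1..int h}"
  using assms by (auto simp: deutsch_predecessors_def deutsch_step_def)

lemma bounded_deutsch_paths_0: "bounded_deutsch_paths t h j 0 = (if j = 0 then {[]} else {})"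
  by (auto simp: bounded_deutsch_paths_def)

lemma bounded_deutsch_paths_level_bounds:
  assumes "ss \<in> bounded_deutsch_paths t h j n"
  shows "- int t \<le> j" "j \<le> int h"
  using assms by (auto simp: bounded_deutsch_paths_def dest!: spec[of _ n])

lemma snoc_in_bounded_deutsch_paths_iff:
  "ss @ [s] \<in> bounded_deutsch_paths t h j (Suc n) \<longleftrightarrow>
     ss \<in> bounded_deutsch_paths t h (j - s) n \<and> deutsch_step s \<and> - int t \<le> j \<and> j \<le> int h"
  by (auto simp: bounded_deutsch_paths_def le_Suc_eq all_conj_distrib)

lemma sum_deutsch_predecessors:
  fixes H :: "int \<Rightarrow> 'a::comm_monoid_add"
  assumes "- int t \<le> j" "j \<le> int h" and "H (- int t - 1) = 0"
  shows "(\<Sum>c\<in>deutsch_predecessors t h j. H c) = H (j - 1) + (\<Sum>c\<in>{j + 1..int h}. H c)"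
proof (cases "- int t \<le> j - 1")
  case True
  then have "deutsch_predecessors t h j = insert (j - 1) {j + 1..int h}"
    using assms by (auto simp: deutsch_predecessors_eq)
  then show ?thesis by simp
next
  case False
  then have "deutsch_predecessors t h j = {j + 1..int h}" and "j - 1 = - int t - 1"
    using assms by (auto simp: deutsch_predecessors_eq)
  then show ?thesis using assms(3) by simp
qed

lemma bounded_deutsch_paths_Suc:
  assumes "- int t \<le> j" "j \<le> int h"
  shows "bounded_deutsch_paths t h j (Suc n) =
           (\<Union>c\<in>deutsch_predecessors t h j. (\<lambda>ss. ss @ [j - c]) ` bounded_deutsch_paths t h c n)"
    (is "?L = ?R")
proof (intro equalityI subsetI)
  fix xs assume xs: "xs \<in> ?L"
  then have "xs = butlast xs @ [last xs]"
    by (intro append_butlast_last_id[symmetric]) (auto simp: bounded_deutsch_paths_def)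
  with xs have "butlast xs \<in> bounded_deutsch_paths t h (j - last xs) n" "deutsch_step (last xs)"
    by (metis snoc_in_bounded_deutsch_paths_iff)+
  moreover from this have "j - last xs \<in> deutsch_predecessors t h j"
    by (auto simp: deutsch_predecessors_def dest: bounded_deutsch_paths_level_bounds)
  ultimately show "xs \<in> ?R"
    using \<open>xs = butlast xs @ [last xs]\<close>
    by (intro UN_I[of "j - last xs"] image_eqI[of xs _ "butlast xs"]) simp_all
next
  fix xs assume "xs \<in> ?R"
  then show "xs \<in> ?L"
    using assms by (auto simp: snoc_in_bounded_deutsch_paths_iff deutsch_predecessors_def)
qed

lemma finite_bounded_deutsch_paths: "finite (bounded_deutsch_paths t h j n)"
proof (induction n arbitrary: j)
  case 0
  then show ?case by (simp add: bounded_deutsch_paths_0)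
next
  case (Suc n)
  show ?case
  proof (cases "- int t \<le> j \<and> j \<le> int h")
    case True
    then show ?thesis
      using Suc finite_deutsch_predecessors by (simp add: bounded_deutsch_paths_Suc)
  next
    case False
    then have "bounded_deutsch_paths t h j (Suc n) = {}"
      by (auto dest: bounded_deutsch_paths_level_bounds)
    then show ?thesis by simp
  qed
qed

lemma card_bounded_deutsch_paths_Suc:
  assumes "- int t \<le> j" "j \<le> int h"
  shows "card (bounded_deutsch_paths t h j (Suc n)) =
           (\<Sum>c\<in>deutsch_predecessors t h j. card (bounded_deutsch_paths t h c n))"
  unfolding bounded_deutsch_paths_Suc[OF assms]
  by (subst card_UN_disjoint)
     (auto simp: finite_deutsch_predecessors finite_bounded_deutsch_paths card_image inj_on_def)

definition bounded_deutsch_gf :: "nat \<Rightarrow> nat \<Rightarrow> int \<Rightarrow> 'a::comm_semiring_1 fps" where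
  "bounded_deutsch_gf t h j = Abs_fps (\<lambda>n. of_nat (card (bounded_deutsch_paths t h j n)))"

definition deutsch_system :: "nat \<Rightarrow> nat \<Rightarrow> (int \<Rightarrow> 'a::comm_semiring_1 fps) \<Rightarrow> bool" where
  "deutsch_system t h H \<longleftrightarrow> (\<forall>j \<in> {- int t..int h}.
     H j = (if j = 0 then 1 else 0) + fps_X * (\<Sum>c\<in>deutsch_predecessors t h j. H c))"

lemma deutsch_system_bounded_deutsch_gf: "deutsch_system t h (bounded_deutsch_gf t h)"
  unfolding deutsch_system_def
proof (intro ballI fps_ext)
  fix j n assume "j \<in> {- int t..int h}"
  then show "bounded_deutsch_gf t h j $ n =
    ((if j = 0 then 1 else 0) + fps_X * (\<Sum>c\<in>deutsch_predecessors t h j. bounded_deutsch_gf t h c)) $ n"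
    by (cases n) (simp_all add: bounded_deutsch_gf_def bounded_deutsch_paths_0
                                card_bounded_deutsch_paths_Suc fps_sum_nth)
qed

lemma deutsch_system_nth_Suc:
  assumes "deutsch_system t h H" and "j \<in> {- int t..int h}"
  shows "H j $ Suc n = (\<Sum>c\<in>deutsch_predecessors t h j. H c $ n)"
  using assms by (subst (asm) deutsch_system_def) (simp add: fps_sum_nth)

lemma deutsch_system_unique:
  assumes "deutsch_system t h H" "deutsch_system t h H'" and "j \<in> {- int t..int h}"
  shows "H j = H' j"
proof -
  have "\<forall>j \<in> {- int t..int h}. H j $ n = H' j $ n" for n
  proof (induction n)
    case 0
    show ?case using assms(1,2) by (auto simp: deutsch_system_def)
  next
    case (Suc n)
    show ?case
    proof
      fix j assume j: "j \<in> {- int t..int h}"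
      have "H j $ Suc n = (\<Sum>c\<in>deutsch_predecessors t h j. H c $ n)"
        using assms(1) j by (rule deutsch_system_nth_Suc)
      also have "\<dots> = (\<Sum>c\<in>deutsch_predecessors t h j. H' c $ n)"
        using Suc deutsch_predecessors_subset by (intro sum.cong) blast+
      also have "\<dots> = H' j $ Suc n"
        using assms(2) j by (rule deutsch_system_nth_Suc[symmetric])
      finally show "H j $ Suc n = H' j $ Suc n" .
    qed
  qed
  with assms(3) show ?thesis by (auto intro: fps_ext)
qed

lemma summed_second_order_recurrence:
  fixes H d :: "int \<Rightarrow> 'a::comm_ring_1" and z :: 'a and l h j :: int
  assumes top: "H h = d h + z * H (h - 1)"
    and rec: "\<And>j. l \<le> j \<Longrightarrow> j < h \<Longrightarrow>
                (1 + z) * H j - (1 + z) * H (j + 1) - z * H (j - 1) = d j - d (j + 1)"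
    and "l \<le> j" "j \<le> h"
  shows "H j = d j + z * H (j - 1) + z * (\<Sum>c\<in>{j + 1..h}. H c)"
  using \<open>j \<le> h\<close> \<open>l \<le> j\<close>
proof (induction j rule: int_le_induct)
  case base
  show ?case using top by simp
next
  case (step j)
  have "{j..h} = insert j {j + 1..h}" using step.hyps by auto
  then have "(\<Sum>c\<in>{j..h}. H c) = H j + (\<Sum>c\<in>{j + 1..h}. H c)" by simp
  moreover have "(1 + z) * H (j - 1) - (1 + z) * H j - z * H (j - 1 - 1) = d (j - 1) - d j"
    using rec[of "j - 1"] step by simp
  moreover have "H j = d j + z * H (j - 1) + z * (\<Sum>c\<in>{j + 1..h}. H c)"
    using step by simp
  ultimately show ?case by (simp add: algebra_simps)
qed

lemma power_int_kernel_root: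
  fixes x z :: "'a::field"
  assumes "x \<noteq> 0" and "(1 + z) * x - (1 + z) * x^2 - z = 0"
  shows "(1 + z) * x powi j - (1 + z) * x powi (j + 1) - z * x powi (j - 1) = 0"
proof -
  have "(1 + z) * x powi j - (1 + z) * x powi (j + 1) - z * x powi (j - 1)
          = x powi (j - 1) * ((1 + z) * x - (1 + z) * x^2 - z)"
    using assms(1) by (simp add: power_int_add power_int_diff power2_eq_square field_simps)
  with assms(2) show ?thesis by simp
qed

lemma kernel_root_difference:
  fixes a b z c K :: "'a::field"
  assumes "a \<noteq> 0" "(1 + z) * a - (1 + z) * a^2 - z = 0"
      and "b \<noteq> 0" "(1 + z) * b - (1 + z) * b^2 - z = 0"
  shows "(1 + z) * (c * (a powi j - K * b powi j)) - (1 + z) * (c * (a powi (j + 1) - K * b powi (j + 1)))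
           - z * (c * (a powi (j - 1) - K * b powi (j - 1))) = 0"
proof -
  let ?E = "\<lambda>x. (1 + z) * x powi j - (1 + z) * x powi (j + 1) - z * x powi (j - 1)"
  have "(1 + z) * (c * (a powi j - K * b powi j)) - (1 + z) * (c * (a powi (j + 1) - K * b powi (j + 1)))
          - z * (c * (a powi (j - 1) - K * b powi (j - 1))) = c * (?E a - K * ?E b)"
    by (simp add: algebra_simps)
  with power_int_kernel_root[OF assms(1,2)] power_int_kernel_root[OF assms(3,4)] show ?thesis
    by simp
qed

definition deutsch_kernel_solution :: "'a::field \<Rightarrow> nat \<Rightarrow> nat \<Rightarrow> int \<Rightarrow> 'a" where
  "deutsch_kernel_solution V t h j =
     (if j < 0 then V * (1 - V^(h + 1)) * (1 + V + V^2) / ((1 + V)^2 * (1 - V) * (1 - V^(h + t + 3)))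
                      * ((1 / (1 + V)) powi j - V^(t + 1) * (V / (1 + V)) powi j)
      else (1 - V^(t + 2)) * (1 + V + V^2) / ((1 + V)^2 * (1 - V) * (1 - V^(h + t + 3)))
                      * ((V / (1 + V)) powi j - V^(h + 2) * (1 / (1 + V)) powi j))"

definition bounded_deutsch_formula :: "'a::field \<Rightarrow> nat \<Rightarrow> nat \<Rightarrow> int \<Rightarrow> 'a" where
  "bounded_deutsch_formula v t h i =
     (if i < 0 then (1 + v) powi (- i - 2) * (1 - v ^ nat (i + int t + 1)) * v
                      * (1 - v ^ (h + 1)) * (1 + v + v ^ 2) / ((1 - v) * (1 - v ^ (h + t + 3)))
      else v ^ nat i * (1 - v ^ (t + 2)) * (1 - v ^ nat (2 - i + int h)) * (1 + v + v ^ 2)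
             / ((1 - v) * (1 + v) ^ nat (i + 2) * (1 - v ^ (h + t + 3))))"

locale deutsch_kernel =
  fixes V :: "'a::field" and t h :: nat
  assumes nonzero: "V \<noteq> 0" "1 + V \<noteq> 0" "1 - V \<noteq> 0" "1 + V + V^2 \<noteq> 0" "1 - V^(h + t + 3) \<noteq> 0"
begin

abbreviation z :: 'a where "z \<equiv> V / (1 + V + V^2)"
abbreviation S :: "int \<Rightarrow> 'a" where "S \<equiv> deutsch_kernel_solution V t h"

lemma kernel_root:
  assumes "x = V / (1 + V) \<or> x = 1 / (1 + V)"
  shows "(1 + z) * x - (1 + z) * x^2 - z = 0"
  using assms
proof
  assume x: "x = V / (1 + V)"
  show ?thesis unfolding x using nonzero by (simp add: divide_simps) algebra
next
  assume x: "x = 1 / (1 + V)"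
  show ?thesis unfolding x using nonzero by (simp add: divide_simps) algebra
qed

lemma solution_recurrence_homogeneous:
  assumes "j + 1 < 0 \<or> 1 \<le> j"
  shows "(1 + z) * S j - (1 + z) * S (j + 1) - z * S (j - 1) = 0"
  using assms
proof
  assume "j + 1 < 0"
  then have "j < 0" "j + 1 < 0" "j - 1 < 0" by simp_all
  then show ?thesis
    unfolding deutsch_kernel_solution_def using nonzero
    by (simp only: if_True) (intro kernel_root_difference kernel_root; simp)
next
  assume "1 \<le> j"
  then have "\<not> j < 0" "\<not> j + 1 < 0" "\<not> j - 1 < 0" by simp_all
  then show ?thesis
    unfolding deutsch_kernel_solution_def using nonzero
    by (simp only: if_False) (intro kernel_root_difference kernel_root; simp)
qed

lemma solution_recurrence_zero: "(1 + z) * S 0 - (1 + z) * S 1 - z * S (-1) = 1"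
  using nonzero by (simp add: deutsch_kernel_solution_def power_int_def power_add divide_simps) algebra

lemma solution_recurrence_minus_one: "(1 + z) * S (-1) - (1 + z) * S 0 - z * S (-2) = -1"
  using nonzero by (simp add: deutsch_kernel_solution_def power_int_def power_add divide_simps) algebra

lemma solution_top: "S h = (if h = 0 then 1 else 0) + z * S (int h - 1)"
proof (cases h)
  case 0
  show ?thesis
    using nonzero
    by (simp add: \<open>h = 0\<close> deutsch_kernel_solution_def power_int_def power_add divide_simps)
       algebra
next
  case (Suc k)
  show ?thesis
    using nonzero
    by (simp add: \<open>h = Suc k\<close> deutsch_kernel_solution_def power_int_def power_add
                  nat_add_distrib divide_simps)
       algebra
qed

lemma solution_bottom: "S (- int t - 1) = 0"
  using nonzero by (simp add: deutsch_kernel_solution_def power_int_def power_divide nat_add_distrib)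

lemma solution_recurrence:
  "(1 + z) * S j - (1 + z) * S (j + 1) - z * S (j - 1) =
     (if j = 0 then 1 else 0) - (if j + 1 = 0 then 1 else 0)"
proof -
  consider "j + 1 < 0 \<or> 1 \<le> j" | "j = -1" | "j = 0" by linarith
  then show ?thesis
    using solution_recurrence_homogeneous solution_recurrence_minus_one solution_recurrence_zero
    by cases auto
qed

lemma solution_system:
  assumes "- int t \<le> j" "j \<le> int h"
  shows "S j = (if j = 0 then 1 else 0) + z * (\<Sum>c\<in>deutsch_predecessors t h j. S c)"
proof -
  have "S j = (if j = 0 then 1 else 0) + z * S (j - 1) + z * (\<Sum>c\<in>{j + 1..int h}. S c)"
    using solution_top solution_recurrence assms
    by (intro summed_second_order_recurrence[where l = "- int t"]) auto
  with assms solution_bottom show ?thesis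
    by (simp add: sum_deutsch_predecessors distrib_left)
qed

lemma solution_eq_formula:
  assumes "- int t \<le> j" "j \<le> int h"
  shows "S j = bounded_deutsch_formula V t h j"
proof (cases "j < 0")
  case True
  define m where "m = nat (- j)"
  have m: "j = - int m" "m \<le> t" using True assms by (auto simp: m_def)
  then obtain r where r: "t = m + r" using le_Suc_ex by blast
  have powers: "(1 / (1 + V)) powi j = (1 + V)^m" "(V / (1 + V)) powi j = ((1 + V) / V)^m"
      "(1 + V) powi (- j - 2) = (1 + V)^m / (1 + V)^2" "nat (j + int t + 1) = r + 1"
    using nonzero m r by (simp_all add: power_int_minus_divide power_int_diff power_divide)
  show ?thesis
    using True nonzero unfolding deutsch_kernel_solution_def bounded_deutsch_formula_def powers
    by (simp add: r power_add divide_simps) algebra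
next
  case False
  define n where "n = nat j"
  have n: "j = int n" "n \<le> h" using False assms by (auto simp: n_def)
  then obtain r where r: "h = n + r" using le_Suc_ex by blast
  have powers: "(V / (1 + V)) powi j = V^n / (1 + V)^n" "(1 / (1 + V)) powi j = 1 / (1 + V)^n"
      "nat j = n" "nat (2 - j + int h) = r + 2" "nat (j + 2) = n + 2"
    using n r by (simp_all add: power_divide)
  show ?thesis
    using False nonzero unfolding deutsch_kernel_solution_def bounded_deutsch_formula_def powers
    by (simp add: r power_add divide_simps) algebra
qed

end

lemma fps_to_fls_sum: "fps_to_fls (sum f A) = (\<Sum>x\<in>A. fps_to_fls (f x))"
  by (induction A rule: infinite_finite_induct) auto

lemma fps_to_fls_divide:
  fixes f g :: "'a::field fps"
  assumes "g $ 0 \<noteq> 0"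
  shows "fps_to_fls (f / g) = fps_to_fls f / fps_to_fls g"
  using assms by (simp add: fls_divide_fps_to_fls)

lemma fps_to_fls_power_int:
  fixes a :: "'a::field fps"
  assumes "a $ 0 \<noteq> 0"
  shows "fps_to_fls (fps_power_int a k) = fps_to_fls a powi k"
  using assms
  by (simp add: fps_power_int_def power_int_def fps_to_fls_power fls_inverse_fps_to_fls)

definition bounded_deutsch_formula_fps :: "nat \<Rightarrow> nat \<Rightarrow> 'a::field fps \<Rightarrow> int \<Rightarrow> 'a fps" where
  "bounded_deutsch_formula_fps t h v i =
     (if i < 0 then fps_power_int (1 + v) (- i - 2) * (1 - v ^ nat (i + int t + 1)) * v
                      * (1 - v ^ (h + 1)) * (1 + v + v ^ 2) / ((1 - v) * (1 - v ^ (h + t + 3)))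
      else v ^ nat i * (1 - v ^ (t + 2)) * (1 - v ^ nat (2 - i + int h)) * (1 + v + v ^ 2)
             / ((1 - v) * (1 + v) ^ nat (i + 2) * (1 - v ^ (h + t + 3))))"

lemma fps_to_fls_bounded_deutsch_formula_fps:
  assumes "v $ 0 = 0"
  shows "fps_to_fls (bounded_deutsch_formula_fps t h v i) = bounded_deutsch_formula (fps_to_fls v) t h i"
  using assms
  by (simp add: bounded_deutsch_formula_fps_def bounded_deutsch_formula_def fps_to_fls_divide
                fps_to_fls_power_int fls_times_fps_to_fls fps_to_fls_power fps_nth_power_0 power_0_left)

lemma deutsch_kernel_fps_to_fls:
  assumes "v $ 0 = 0" "v \<noteq> 0"
  shows "deutsch_kernel (fps_to_fls v) t h"
proof -
  have "fps_to_fls p \<noteq> 0" if "p $ 0 \<noteq> 0" for p :: "'a fps"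
    using that by auto
  from this[of "1 + v"] this[of "1 - v"] this[of "1 + v + v^2"] this[of "1 - v^(h + t + 3)"]
  show ?thesis
    using assms by unfold_locales (simp_all add: fps_to_fls_power fps_nth_power_0 power_0_left)
qed

lemma deutsch_system_bounded_deutsch_formula_fps:
  fixes v :: "'a::field fps"
  assumes "v $ 0 = 0" and X: "fps_X = v / (1 + v + v^2)"
  shows "deutsch_system t h (bounded_deutsch_formula_fps t h v)"
  unfolding deutsch_system_def
proof
  let ?V = "fps_to_fls v" and ?F = "bounded_deutsch_formula_fps t h v"
  have "v \<noteq> 0" using X by auto
  interpret deutsch_kernel ?V t h
    using assms(1) \<open>v \<noteq> 0\<close> by (rule deutsch_kernel_fps_to_fls)
  have fls_X: "fls_X = ?V / (1 + ?V + ?V^2)"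
    using arg_cong[OF X, of fps_to_fls] assms(1)
    by (simp add: fps_to_fls_divide fps_to_fls_power fps_nth_power_0)
  have F_eq_S: "fps_to_fls (?F c) = S c" if "c \<in> {- int t..int h}" for c
    using that assms(1) by (simp add: fps_to_fls_bounded_deutsch_formula_fps solution_eq_formula)
  fix j assume j: "j \<in> {- int t..int h}"
  have "fps_to_fls (?F j) = S j" using j by (rule F_eq_S)
  also have "\<dots> = (if j = 0 then 1 else 0) + z * (\<Sum>c\<in>deutsch_predecessors t h j. S c)"
    using j by (simp add: solution_system)
  also have "\<dots> = fps_to_fls ((if j = 0 then 1 else 0) + fps_X * (\<Sum>c\<in>deutsch_predecessors t h j. ?F c))"
  proof -
    have "(\<Sum>c\<in>deutsch_predecessors t h j. S c) = fps_to_fls (\<Sum>c\<in>deutsch_predecessors t h j. ?F c)"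
      unfolding fps_to_fls_sum using F_eq_S deutsch_predecessors_subset
      by (intro sum.cong refl) (metis subsetD)
    then show ?thesis by (simp add: fls_X fls_times_fps_to_fls)
  qed
  finally show "?F j = (if j = 0 then 1 else 0) + fps_X * (\<Sum>c\<in>deutsch_predecessors t h j. ?F c)"
    by (simp only: fps_to_fls_eq_iff)
qed

theorem theorem5:
  fixes t h :: nat and i :: int and v Phi :: "real fps"
  assumes "- int t \<le> i" and "i \<le> int h"
    and "Phi = Abs_fps (\<lambda>n. real (card (bounded_deutsch_paths t h i n)))"
    and "fps_nth v 0 = 0"
    and "fps_X = v / (1 + v + v ^ 2)"
  shows "(i < 0 \<longrightarrow> Phi =
            fps_power_int (1 + v) (- i - 2) * (1 - v ^ nat (i + int t + 1)) * v
              * (1 - v ^ (h + 1)) * (1 + v + v ^ 2)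
            / ((1 - v) * (1 - v ^ (h + t + 3))))
       \<and> (0 \<le> i \<longrightarrow> Phi =
            v ^ nat i * (1 - v ^ (t + 2)) * (1 - v ^ nat (2 - i + int h)) * (1 + v + v ^ 2)
            / ((1 - v) * (1 + v) ^ nat (i + 2) * (1 - v ^ (h + t + 3))))"
proof -
  have "Phi = bounded_deutsch_gf t h i"
    using assms(3) by (simp add: bounded_deutsch_gf_def)
  also have "\<dots> = bounded_deutsch_formula_fps t h v i"
    using deutsch_system_bounded_deutsch_gf deutsch_system_bounded_deutsch_formula_fps[OF assms(4,5)]
    by (rule deutsch_system_unique) (use assms(1,2) in simp)
  finally show ?thesis
    by (simp add: bounded_deutsch_formula_fps_def)
qed

end
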